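(* Let $n\ge1$ and $s\ge1$ be integers, $\delta>0$, and $p_t\in[0,1)$. Let $\ell=\frac{6(2+\delta)^2}{\delta^2}\cdot\frac{\log(\sqrt{2}\,n)}{1-p_t}$ and suppose $\ell\le s$. Let $A\in\{0,1\}^{s\times n}$ be a random matrix whose entries are independent with $\Pr[A_{i,j}=1]=p_a=\ell/s$, and, independently of $A$, let $\mathcal{R}\subseteq[s]$ be a random set containing each $i\in[s]$ independently with probability $1-p_t$. Then with probability at least $1-\frac1n$ there exists a vector $\mathbf{b}\in\mathbb{R}^{|\mathcal{R}|}$ with non-negative entries such that $\mathbf{b}^TA_{\mathcal{R}}=(a_1,\ldots,a_n)$ with $1\le a_j\le1+\delta$ for all $j\in[n]$, where $A_{\mathcal{R}}$ is the submatrix of $A$ consisting of the rows indexed by $\mathcal{R}$.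
   Context: Random straggler model: each of the $s$ compute nodes independently fails to respond (is a straggler) with probability $p_t$; $\mathcal{R}$ is the set of non-stragglers. The conclusion is that the random assignment matrix $A$ satisfies the straggler-resilience property (existence of a non-negative recovery vector $\mathbf{b}$ with $\mathbf{b}^TA_{\mathcal{R}}$ having all entries in $[1,1+\delta]$) for the realized set $\mathcal{R}$ of non-stragglers. $\log$ denotes the natural logarithm. *)

theory Defs
  imports "HOL-Probability.Probability"
begin

text \<open>Random 0/1 assignment matrix: entries indexed by (i,j) with i < s, j < n,
  independent Bernoulli(pa); True encodes entry 1.\<close>
definition assign_pmf :: "nat \<Rightarrow> nat \<Rightarrow> real \<Rightarrow> (nat \<times> nat \<Rightarrow> bool) pmf" where
  "assign_pmf s n pa = Pi_pmf ({0..<s} \<times> {0..<n}) False (\<lambda>_. bernoulli_pmf pa)"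

definition nonstraggler_pmf :: "nat \<Rightarrow> real \<Rightarrow> nat set pmf" where
  "nonstraggler_pmf s q = map_pmf (\<lambda>r. {i. r i}) (Pi_pmf {0..<s} False (\<lambda>_. bernoulli_pmf q))"

definition resilient :: "nat \<Rightarrow> real \<Rightarrow> (nat \<times> nat \<Rightarrow> bool) \<Rightarrow> nat set \<Rightarrow> bool" where
  "resilient n \<delta> A R \<longleftrightarrow> (\<exists>b :: nat \<Rightarrow> real. (\<forall>i\<in>R. b i \<ge> 0) \<and>
     (\<forall>j<n. 1 \<le> (\<Sum>i\<in>R. b i * (if A (i, j) then 1 else 0)) \<and>
            (\<Sum>i\<in>R. b i * (if A (i, j) then 1 else 0)) \<le> 1 + \<delta>))"

end

theory Submission
  imports Defs
begin

text \<open>Give every non-straggler the same weight \<open>1 / ((1 - \<epsilon>) \<mu>)\<close>, where \<open>\<epsilon> = \<delta> / (2 + \<delta>)\<close>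
  and \<open>\<mu> = \<ell> (1 - p\<^sub>t)\<close>. Then \<open>b\<^sup>T A\<^sub>R\<close> has all entries in \<open>[1, 1 + \<delta>]\<close> as soon as, for every
  column \<open>j\<close>, the number of ones of column \<open>j\<close> in non-straggling rows lies in
  \<open>[(1 - \<epsilon>) \<mu>, (1 + \<epsilon>) \<mu>]\<close>, because \<open>(1 + \<epsilon>) / (1 - \<epsilon>) = 1 + \<delta>\<close>. That number is binomial
  with parameters \<open>s\<close> and \<open>p\<^sub>a (1 - p\<^sub>t)\<close>, hence has mean \<open>\<mu>\<close>, and by the multiplicative
  Chernoff bounds it leaves the window with probability at most \<open>2 exp (- \<epsilon>\<^sup>2 \<mu> / 3)\<close>,
  which equals \<open>1 / n\<^sup>2\<close> for the chosen \<open>\<ell>\<close>. A union bound over the \<open>n\<close> columns concludes.\<close>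

lemma ln_one_plus_ge:
  fixes x :: real
  assumes "0 \<le> x"
  shows "2 * x / (2 + x) \<le> ln (1 + x)"
proof -
  let ?f = "\<lambda>x::real. ln (1 + x) - 2 * x / (2 + x)"
  have "?f 0 \<le> ?f x"
  proof (rule DERIV_nonneg_imp_nondecreasing[OF assms], intro exI conjI)
    fix y :: real
    assume y: "0 \<le> y" "y \<le> x"
    show "(?f has_real_derivative (1 / (1 + y) - (2 * (2 + y) - 2 * y) / ((2 + y) * (2 + y)))) (at y)"
      using y by (auto intro!: derivative_eq_intros simp: power2_eq_square)
    have "1 / (1 + y) - (2 * (2 + y) - 2 * y) / ((2 + y) * (2 + y)) = y * y / ((1 + y) * ((2 + y) * (2 + y)))"
      using y by (simp add: divide_simps) (simp add: algebra_simps)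
    then show "0 \<le> 1 / (1 + y) - (2 * (2 + y) - 2 * y) / ((2 + y) * (2 + y))"
      using y by simp
  qed
  then show ?thesis by simp
qed

lemma chernoff_upper_exponent:
  fixes e :: real
  assumes "0 \<le> e" "e \<le> 1"
  shows "e + e\<^sup>2 / 3 \<le> (1 + e) * ln (1 + e)"
proof -
  have "e * e * e \<le> e * e * 1" using assms by (intro mult_left_mono) auto
  then have "e + e\<^sup>2 / 3 \<le> (1 + e) * (2 * e / (2 + e))"
    using assms by (simp add: field_simps power2_eq_square)
  also have "\<dots> \<le> (1 + e) * ln (1 + e)"
    using ln_one_plus_ge[of e] assms by (intro mult_left_mono) auto
  finally show ?thesis .
qed

lemma chernoff_lower_exponent:
  fixes e :: real
  assumes "0 \<le> e" "e < 1"
  shows "- e + e\<^sup>2 / 2 \<le> (1 - e) * ln (1 - e)"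
proof -
  let ?f = "\<lambda>x::real. (1 - x) * ln (1 - x) + x - x * x / 2"
  have "?f 0 \<le> ?f e"
  proof (rule DERIV_nonneg_imp_nondecreasing[OF assms(1)], intro exI conjI)
    fix y :: real
    assume y: "0 \<le> y" "y \<le> e"
    then have "y < 1" using assms by simp
    then show "(?f has_real_derivative (- ln (1 - y) - y)) (at y)"
      by (auto intro!: derivative_eq_intros)
    have "ln (1 - y) \<le> (1 - y) - 1" using \<open>y < 1\<close> by (intro ln_le_minus_one) auto
    then show "0 \<le> - ln (1 - y) - y" by simp
  qed
  then show ?thesis by (simp add: power2_eq_square)
qed

lemma binomial_pmf_exp_moment_le:
  fixes p t :: real
  assumes "p \<in> {0..1}"
  shows "(\<Sum>k\<le>n. pmf (binomial_pmf n p) k * exp (t * k)) \<le> exp (n * p * (exp t - 1))"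
proof -
  have "(\<Sum>k\<le>n. pmf (binomial_pmf n p) k * exp (t * k))
      = (\<Sum>k\<le>n. real (n choose k) * (p * exp t) ^ k * (1 - p) ^ (n - k))"
    using assms by (intro sum.cong refl)
      (simp add: power_mult_distrib exp_of_nat_mult[symmetric] mult.commute mult.left_commute)
  also have "\<dots> = (1 + p * (exp t - 1)) ^ n"
    by (subst binomial_ring[symmetric]) (simp add: algebra_simps)
  also have "\<dots> \<le> exp (p * (exp t - 1)) ^ n"
  proof (rule power_mono)
    have "0 \<le> p * exp t + (1 - p)" using assms by simp
    then show "0 \<le> 1 + p * (exp t - 1)" by (simp add: algebra_simps)
  qed (rule exp_ge_add_one_self)
  also have "\<dots> = exp (n * p * (exp t - 1))"
    by (simp add: exp_of_nat_mult[symmetric] mult.assoc)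
  finally show ?thesis .
qed

lemma binomial_pmf_prob_le_exp_moment:
  fixes p t c :: real
  assumes "p \<in> {0..1}" "c > 0" "\<And>k. k \<in> S \<Longrightarrow> c \<le> exp (t * k)"
  shows "measure_pmf.prob (binomial_pmf n p) S \<le> exp (n * p * (exp t - 1)) / c"
proof -
  let ?B = "binomial_pmf n p"
  have "measure_pmf.prob ?B S = measure_pmf.prob ?B (S \<inter> set_pmf ?B)"
    by (simp add: measure_Int_set_pmf)
  also have "\<dots> \<le> measure_pmf.prob ?B (S \<inter> {..n})"
    using assms by (intro measure_pmf.finite_measure_mono) (auto simp: set_pmf_binomial_eq)
  also have "\<dots> = (\<Sum>k\<in>S \<inter> {..n}. pmf ?B k)"
    by (rule measure_measure_pmf_finite) auto
  also have "\<dots> \<le> (\<Sum>k\<in>S \<inter> {..n}. pmf ?B k * exp (t * k) / c)"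
  proof (rule sum_mono)
    fix k
    assume "k \<in> S \<inter> {..n}"
    then have "1 \<le> exp (t * k) / c" using assms by simp
    then show "pmf ?B k \<le> pmf ?B k * exp (t * k) / c"
      using mult_left_mono[of 1 "exp (t * k) / c" "pmf ?B k"] by simp
  qed
  also have "\<dots> \<le> (\<Sum>k\<le>n. pmf ?B k * exp (t * k)) / c"
    unfolding sum_divide_distrib by (intro sum_mono2) (use assms in auto)
  also have "\<dots> \<le> exp (n * p * (exp t - 1)) / c"
    using assms by (intro divide_right_mono binomial_pmf_exp_moment_le) auto
  finally show ?thesis .
qed

text \<open>Both tails are Markov's inequality for \<open>exp (t k)\<close> at the optimal \<open>t = ln (1 \<plusminus> e)\<close>.\<close>

lemma binomial_pmf_upper_tail:
  fixes p e :: real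
  assumes "p \<in> {0..1}" "0 \<le> e" "e \<le> 1"
  shows "measure_pmf.prob (binomial_pmf n p) {k. (1 + e) * (n * p) < k} \<le> exp (- (e\<^sup>2 * (n * p) / 3))"
proof -
  define \<mu> where "\<mu> = n * p"
  have "\<mu> \<ge> 0" using assms by (simp add: \<mu>_def)
  have "measure_pmf.prob (binomial_pmf n p) {k. (1 + e) * \<mu> < k}
      \<le> exp (\<mu> * (exp (ln (1 + e)) - 1)) / exp (ln (1 + e) * ((1 + e) * \<mu>))"
    unfolding \<mu>_def by (rule binomial_pmf_prob_le_exp_moment) (use assms in \<open>auto intro: mult_left_mono\<close>)
  also have "\<dots> = exp (\<mu> * (e - (1 + e) * ln (1 + e)))"
    using assms by (simp add: exp_diff[symmetric] algebra_simps)
  also have "\<dots> \<le> exp (- (e\<^sup>2 * \<mu> / 3))"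
    using mult_left_mono[OF chernoff_upper_exponent[OF assms(2,3)] \<open>\<mu> \<ge> 0\<close>]
    by (simp add: algebra_simps)
  finally show ?thesis by (simp add: \<mu>_def)
qed

lemma binomial_pmf_lower_tail:
  fixes p e :: real
  assumes "p \<in> {0..1}" "0 \<le> e" "e < 1"
  shows "measure_pmf.prob (binomial_pmf n p) {k. k < (1 - e) * (n * p)} \<le> exp (- (e\<^sup>2 * (n * p) / 2))"
proof -
  define \<mu> where "\<mu> = n * p"
  have "\<mu> \<ge> 0" using assms by (simp add: \<mu>_def)
  have "measure_pmf.prob (binomial_pmf n p) {k. k < (1 - e) * \<mu>}
      \<le> exp (\<mu> * (exp (ln (1 - e)) - 1)) / exp (ln (1 - e) * ((1 - e) * \<mu>))"
    unfolding \<mu>_def by (rule binomial_pmf_prob_le_exp_moment) (use assms in \<open>auto intro: mult_left_mono_neg\<close>)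
  also have "\<dots> = exp (\<mu> * (- e - (1 - e) * ln (1 - e)))"
    using assms by (simp add: exp_diff[symmetric] algebra_simps)
  also have "\<dots> \<le> exp (- (e\<^sup>2 * \<mu> / 2))"
    using mult_left_mono[OF chernoff_lower_exponent[OF assms(2,3)] \<open>\<mu> \<ge> 0\<close>]
    by (simp add: algebra_simps)
  finally show ?thesis by (simp add: \<mu>_def)
qed

lemma binomial_pmf_deviation_prob_le:
  fixes p e :: real
  assumes "p \<in> {0..1}" "0 \<le> e" "e < 1"
  shows "measure_pmf.prob (binomial_pmf n p) {k. k < (1 - e) * (n * p) \<or> (1 + e) * (n * p) < k}
           \<le> 2 * exp (- (e\<^sup>2 * (n * p) / 3))"
proof -
  have "measure_pmf.prob (binomial_pmf n p) {k. k < (1 - e) * (n * p) \<or> (1 + e) * (n * p) < k}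
      \<le> measure_pmf.prob (binomial_pmf n p) {k. k < (1 - e) * (n * p)}
        + measure_pmf.prob (binomial_pmf n p) {k. (1 + e) * (n * p) < k}"
    unfolding Collect_disj_eq by (rule measure_subadditive) (auto simp: measure_pmf.emeasure_eq_measure)
  also have "\<dots> \<le> exp (- (e\<^sup>2 * (n * p) / 2)) + exp (- (e\<^sup>2 * (n * p) / 3))"
    using assms by (intro add_mono binomial_pmf_lower_tail binomial_pmf_upper_tail) auto
  also have "exp (- (e\<^sup>2 * (n * p) / 2)) \<le> exp (- (e\<^sup>2 * (n * p) / 3))"
    using assms by (simp add: divide_left_mono)
  finally show ?thesis by simp
qed

lemma measure_pmf_prob_Compl_UNION_ge:
  fixes n :: nat and e :: real
  assumes "\<And>j. j < n \<Longrightarrow> measure_pmf.prob M (B j) \<le> e"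
  shows "1 - n * e \<le> measure_pmf.prob M (- (\<Union>j<n. B j))"
proof -
  have "measure_pmf.prob M (\<Union>j<n. B j) \<le> (\<Sum>j<n. measure_pmf.prob M (B j))"
    by (rule measure_pmf.finite_measure_subadditive_finite) auto
  also have "\<dots> \<le> n * e"
    using sum_mono[of "{..<n}", OF assms] by simp
  finally show ?thesis
    using measure_pmf.prob_compl[of "\<Union>j<n. B j" M] by (simp add: Compl_eq_Diff_UNIV)
qed

lemma bernoulli_pmf_conj:
  assumes "p \<in> {0..1}" "q \<in> {0..1}"
  shows "map_pmf (\<lambda>(a, b). a \<and> b) (pair_pmf (bernoulli_pmf p) (bernoulli_pmf q)) = bernoulli_pmf (p * q)"
proof (rule pmf_eqI)
  fix x :: bool
  have "map_pmf (\<lambda>(a, b). a \<and> b) (pair_pmf (bernoulli_pmf p) (bernoulli_pmf q)) =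
          bind_pmf (bernoulli_pmf p) (\<lambda>a. bind_pmf (bernoulli_pmf q) (\<lambda>b. return_pmf (a \<and> b)))"
    by (simp add: map_pmf_def pair_pmf_def bind_assoc_pmf bind_return_pmf)
  moreover have "p * q \<le> 1" using assms mult_le_one by auto
  ultimately show "pmf (map_pmf (\<lambda>(a, b). a \<and> b) (pair_pmf (bernoulli_pmf p) (bernoulli_pmf q))) x
      = pmf (bernoulli_pmf (p * q)) x"
    using assms by (cases x) (simp_all add: pmf_bind measure_pmf_single algebra_simps)
qed

lemma pair_pmf_Pi_pmf:
  assumes "finite A"
  shows "pair_pmf (Pi_pmf A d p) (Pi_pmf A e q) =
           map_pmf (\<lambda>h. (fst \<circ> h, snd \<circ> h)) (Pi_pmf A (d, e) (\<lambda>x. pair_pmf (p x) (q x)))"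
proof (rule pmf_eqI)
  fix fg :: "('a \<Rightarrow> 'b) \<times> ('a \<Rightarrow> 'c)"
  obtain f g where fg: "fg = (f, g)" by fastforce
  have inj: "inj (\<lambda>h. (fst \<circ> h, snd \<circ> h))"
    by (rule injI) (auto simp: fun_eq_iff prod_eq_iff)
  have "pmf (map_pmf (\<lambda>h. (fst \<circ> h, snd \<circ> h)) (Pi_pmf A (d, e) (\<lambda>x. pair_pmf (p x) (q x)))) fg
      = pmf (Pi_pmf A (d, e) (\<lambda>x. pair_pmf (p x) (q x))) (\<lambda>x. (f x, g x))"
    using pmf_map_inj'[OF inj, of _ "\<lambda>x. (f x, g x)"] by (simp add: fg o_def)
  also have "\<dots> = pmf (pair_pmf (Pi_pmf A d p) (Pi_pmf A e q)) fg"
    using assms by (auto simp: fg pmf_pair pmf_Pi prod.distrib)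
  finally show "pmf (pair_pmf (Pi_pmf A d p) (Pi_pmf A e q)) fg =
      pmf (map_pmf (\<lambda>h. (fst \<circ> h, snd \<circ> h)) (Pi_pmf A (d, e) (\<lambda>x. pair_pmf (p x) (q x)))) fg" ..
qed

lemma Pi_pmf_bernoulli_conj:
  assumes "finite A" "p \<in> {0..1}" "q \<in> {0..1}"
  shows "map_pmf (\<lambda>(f, g) x. f x \<and> g x)
           (pair_pmf (Pi_pmf A False (\<lambda>_. bernoulli_pmf p)) (Pi_pmf A False (\<lambda>_. bernoulli_pmf q)))
         = Pi_pmf A False (\<lambda>_. bernoulli_pmf (p * q))"
proof -
  have "Pi_pmf A False (\<lambda>_. bernoulli_pmf (p * q))
      = Pi_pmf A False (\<lambda>_. map_pmf (\<lambda>(a, b). a \<and> b) (pair_pmf (bernoulli_pmf p) (bernoulli_pmf q)))"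
    using assms by (simp add: bernoulli_pmf_conj)
  also have "\<dots> = map_pmf (\<lambda>h. (\<lambda>(a, b). a \<and> b) \<circ> h)
                    (Pi_pmf A (False, False) (\<lambda>_. pair_pmf (bernoulli_pmf p) (bernoulli_pmf q)))"
    using assms by (intro Pi_pmf_map) auto
  finally show ?thesis
    using assms by (simp add: pair_pmf_Pi_pmf pmf.map_comp o_def case_prod_unfold)
qed

lemma Pi_pmf_Times_column:
  assumes "finite I" "finite J" "j \<in> J"
  shows "map_pmf (\<lambda>f i. f (i, j)) (Pi_pmf (I \<times> J) d (\<lambda>_. P)) = Pi_pmf I d (\<lambda>_. P)"
proof -
  have "bij_betw (\<lambda>i. (i, j)) I (I \<times> {j})" by (auto simp: bij_betw_def inj_on_def)
  then have "Pi_pmf I d (\<lambda>_. P) = map_pmf (\<lambda>g. g \<circ> (\<lambda>i. (i, j))) (Pi_pmf (I \<times> {j}) d (\<lambda>_. P))"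
    using assms by (intro Pi_pmf_bij_betw) auto
  also have "Pi_pmf (I \<times> {j}) d (\<lambda>_. P)
      = map_pmf (\<lambda>f x. if x \<in> I \<times> {j} then f x else d) (Pi_pmf (I \<times> J) d (\<lambda>_. P))"
    using assms by (intro Pi_pmf_subset) auto
  also have "map_pmf (\<lambda>g. g \<circ> (\<lambda>i. (i, j))) \<dots> = map_pmf (\<lambda>f i. f (i, j)) (Pi_pmf (I \<times> J) d (\<lambda>_. P))"
    unfolding pmf.map_comp
  proof (intro map_pmf_cong refl)
    fix f
    assume "f \<in> set_pmf (Pi_pmf (I \<times> J) d (\<lambda>_. P))"
    then have "f (i, j) = d" if "i \<notin> I" for i
      using set_Pi_pmf_subset[of "I \<times> J" d] assms that by auto
    then show "((\<lambda>g. g \<circ> (\<lambda>i. (i, j))) \<circ> (\<lambda>f x. if x \<in> I \<times> {j} then f x else d)) f = (\<lambda>f i. f (i, j)) f"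
      by (auto simp: fun_eq_iff)
  qed
  finally show ?thesis ..
qed

lemma set_nonstraggler_pmf_subset:
  "R \<in> set_pmf (nonstraggler_pmf s q) \<Longrightarrow> R \<subseteq> {0..<s}"
  by (auto simp: nonstraggler_pmf_def dest!: subsetD[OF set_Pi_pmf_subset[OF finite_atLeastLessThan]])

lemma column_count_binomial:
  assumes "j < n" "p \<in> {0..1}" "q \<in> {0..1}"
  shows "map_pmf (\<lambda>(A, R). card {i\<in>R. A (i, j)}) (pair_pmf (assign_pmf s n p) (nonstraggler_pmf s q))
           = binomial_pmf s (p * q)"
proof -
  have "map_pmf (\<lambda>(A, R). card {i\<in>R. A (i, j)}) (pair_pmf (assign_pmf s n p) (nonstraggler_pmf s q))
      = map_pmf (\<lambda>(A, R). card {i\<in>{0..<s}. A (i, j) \<and> i \<in> R}) (pair_pmf (assign_pmf s n p) (nonstraggler_pmf s q))"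
    by (intro map_pmf_cong refl) (auto dest!: set_nonstraggler_pmf_subset intro!: arg_cong[of _ _ card])
  also have "\<dots> = map_pmf (\<lambda>h. card {i\<in>{0..<s}. h i}) (map_pmf (\<lambda>(f, g) i. f i \<and> g i)
                    (pair_pmf (map_pmf (\<lambda>A i. A (i, j)) (assign_pmf s n p)) (map_pmf (\<lambda>R i. i \<in> R) (nonstraggler_pmf s q))))"
    by (simp add: map_pair[symmetric] pmf.map_comp o_def case_prod_unfold)
  also have "map_pmf (\<lambda>R i. i \<in> R) (nonstraggler_pmf s q) = Pi_pmf {0..<s} False (\<lambda>_. bernoulli_pmf q)"
    by (simp add: nonstraggler_pmf_def pmf.map_comp o_def)
  also have "map_pmf (\<lambda>A i. A (i, j)) (assign_pmf s n p) = Pi_pmf {0..<s} False (\<lambda>_. bernoulli_pmf p)"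
    unfolding assign_pmf_def using assms by (intro Pi_pmf_Times_column) auto
  also have "map_pmf (\<lambda>h. card {i\<in>{0..<s}. h i}) (map_pmf (\<lambda>(f, g) i. f i \<and> g i)
               (pair_pmf (Pi_pmf {0..<s} False (\<lambda>_. bernoulli_pmf p)) (Pi_pmf {0..<s} False (\<lambda>_. bernoulli_pmf q))))
      = binomial_pmf s (p * q)"
    using assms mult_le_one[of p q] Pi_pmf_bernoulli_conj[of "{0..<s}" p q]
      binomial_pmf_altdef'[of "{0..<s}" s "p * q" False] by simp
  finally show ?thesis .
qed

lemma column_count_deviation_prob_le:
  fixes p q e :: real
  assumes "j < n" "p \<in> {0..1}" "q \<in> {0..1}" "0 \<le> e" "e < 1"
  shows "measure_pmf.prob (pair_pmf (assign_pmf s n p) (nonstraggler_pmf s q))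
           {(A, R). card {i\<in>R. A (i, j)} < (1 - e) * (s * (p * q))
                  \<or> (1 + e) * (s * (p * q)) < card {i\<in>R. A (i, j)}}
         \<le> 2 * exp (- (e\<^sup>2 * (s * (p * q)) / 3))"
proof -
  let ?X = "\<lambda>(A, R). card {i\<in>R. A (i, j)}"
  let ?\<mu> = "s * (p * q)"
  have "p * q \<in> {0..1}" using assms mult_le_one[of p q] by auto
  have "measure_pmf.prob (pair_pmf (assign_pmf s n p) (nonstraggler_pmf s q))
          {(A, R). ?X (A, R) < (1 - e) * ?\<mu> \<or> (1 + e) * ?\<mu> < ?X (A, R)}
      = measure_pmf.prob (map_pmf ?X (pair_pmf (assign_pmf s n p) (nonstraggler_pmf s q)))
          {k. k < (1 - e) * ?\<mu> \<or> (1 + e) * ?\<mu> < k}"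
    by (simp add: vimage_def case_prod_unfold)
  also have "\<dots> \<le> 2 * exp (- (e\<^sup>2 * ?\<mu> / 3))"
    unfolding column_count_binomial[OF assms(1-3)]
    using binomial_pmf_deviation_prob_le[OF \<open>p * q \<in> {0..1}\<close> assms(4,5)] .
  finally show ?thesis by simp
qed

lemma resilient_if_column_counts_between:
  fixes A :: "nat \<times> nat \<Rightarrow> bool" and a \<delta> :: real
  assumes "finite R" "a > 0"
    and "\<And>j. j < n \<Longrightarrow> a \<le> card {i\<in>R. A (i, j)} \<and> card {i\<in>R. A (i, j)} \<le> (1 + \<delta>) * a"
  shows "resilient n \<delta> A R"
  unfolding resilient_def
proof (intro exI[of _ "\<lambda>_. 1 / a"] conjI ballI allI impI)
  fix j
  assume "j < n"
  have "(\<Sum>i\<in>R. 1 / a * (if A (i, j) then 1 else 0)) = card {i\<in>R. A (i, j)} / a"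
    using \<open>finite R\<close> sum.inter_filter[of R "\<lambda>_. 1 :: real" "\<lambda>i. A (i, j)"]
    by (simp add: sum_divide_distrib[symmetric])
  then show "1 \<le> (\<Sum>i\<in>R. 1 / a * (if A (i, j) then 1 else 0))"
    and "(\<Sum>i\<in>R. 1 / a * (if A (i, j) then 1 else 0)) \<le> 1 + \<delta>"
    using assms(2) assms(3)[OF \<open>j < n\<close>] by (simp_all add: divide_le_eq le_divide_eq)
qed (use assms in simp)

lemma column_counts_within_prob_ge:
  fixes p q e :: real
  assumes "p \<in> {0..1}" "q \<in> {0..1}" "0 \<le> e" "e < 1"
  shows "1 - n * (2 * exp (- (e\<^sup>2 * (s * (p * q)) / 3)))
           \<le> measure_pmf.prob (pair_pmf (assign_pmf s n p) (nonstraggler_pmf s q))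
               {(A, R). \<forall>j<n. (1 - e) * (s * (p * q)) \<le> card {i\<in>R. A (i, j)}
                              \<and> card {i\<in>R. A (i, j)} \<le> (1 + e) * (s * (p * q))}"
proof -
  let ?M = "pair_pmf (assign_pmf s n p) (nonstraggler_pmf s q)"
  let ?B = "\<lambda>j. {(A, R). card {i\<in>R. A (i, j)} < (1 - e) * (s * (p * q))
                        \<or> (1 + e) * (s * (p * q)) < card {i\<in>R. A (i, j)}}"
  have "1 - n * (2 * exp (- (e\<^sup>2 * (s * (p * q)) / 3))) \<le> measure_pmf.prob ?M (- (\<Union>j<n. ?B j))"
    by (rule measure_pmf_prob_Compl_UNION_ge) (rule column_count_deviation_prob_le[OF _ assms])
  also have "- (\<Union>j<n. ?B j) = {(A, R). \<forall>j<n. (1 - e) * (s * (p * q)) \<le> card {i\<in>R. A (i, j)}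
                                          \<and> card {i\<in>R. A (i, j)} \<le> (1 + e) * (s * (p * q))}"
    by (auto simp: not_less)
  finally show ?thesis .
qed

lemma prob_column_counts_between_le_prob_resilient:
  fixes a \<delta> :: real
  assumes "a > 0"
  shows "measure_pmf.prob (pair_pmf (assign_pmf s n p) (nonstraggler_pmf s q))
           {(A, R). \<forall>j<n. a \<le> card {i\<in>R. A (i, j)} \<and> card {i\<in>R. A (i, j)} \<le> (1 + \<delta>) * a}
         \<le> measure_pmf.prob (pair_pmf (assign_pmf s n p) (nonstraggler_pmf s q)) {(A, R). resilient n \<delta> A R}"
  by (subst (1 2) measure_Int_set_pmf[symmetric], rule measure_pmf.finite_measure_mono)
    (use assms in \<open>auto intro!: resilient_if_column_counts_between dest!: set_nonstraggler_pmf_subset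
      intro: finite_subset\<close>)

lemma exp_deviation_at_sample_size:
  fixes \<delta> :: real
  assumes "n \<ge> 1" "\<delta> > 0"
  shows "2 * exp (- ((\<delta> / (2 + \<delta>))\<^sup>2 * (6 * (2 + \<delta>)\<^sup>2 / \<delta>\<^sup>2 * ln (sqrt 2 * n)) / 3)) = 1 / real n ^ 2"
proof -
  have "(\<delta> / (2 + \<delta>))\<^sup>2 * (6 * (2 + \<delta>)\<^sup>2 / \<delta>\<^sup>2 * ln (sqrt 2 * n)) / 3 = 2 * ln (sqrt 2 * n)"
    using assms by (simp add: field_simps)
  also have "\<dots> = ln ((sqrt 2 * n)\<^sup>2)"
    using assms by (subst ln_realpow) auto
  also have "(sqrt 2 * n)\<^sup>2 = 2 * real n ^ 2"
    by (simp add: power_mult_distrib)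
  finally show ?thesis
    using assms by (simp add: exp_minus inverse_eq_divide)
qed

theorem theorem5:
  fixes n s :: nat and \<delta> p_t l :: real
  assumes "n \<ge> 1" and "s \<ge> 1" and "\<delta> > 0" and "0 \<le> p_t" and "p_t < 1"
    and "l = 6 * (2 + \<delta>)^2 / \<delta>^2 * (ln (sqrt 2 * real n) / (1 - p_t))"
    and "l \<le> real s"
  shows "measure_pmf.prob (pair_pmf (assign_pmf s n (l / real s)) (nonstraggler_pmf s (1 - p_t)))
           {(A, R). resilient n \<delta> A R} \<ge> 1 - 1 / real n"
proof -
  define \<epsilon> where "\<epsilon> = \<delta> / (2 + \<delta>)"
  define \<mu> where "\<mu> = real s * (l / s * (1 - p_t))"
  have "sqrt 2 * real n > 1"
    using assms(1) less_le_trans[of 1 "sqrt 2" "sqrt 2 * n"] by simp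
  then have "l > 0" using assms by simp
  then have pa: "l / s \<in> {0..1}" and q: "1 - p_t \<in> {0..1}"
    using assms(4,5,7) by auto
  have \<mu>: "\<mu> = 6 * (2 + \<delta>)\<^sup>2 / \<delta>\<^sup>2 * ln (sqrt 2 * n)"
    using assms(2,5,6) by (simp add: \<mu>_def)
  then have "\<mu> > 0" using \<open>sqrt 2 * real n > 1\<close> assms(3) by simp
  have \<epsilon>: "0 \<le> \<epsilon>" "\<epsilon> < 1" "(1 + \<epsilon>) * \<mu> = (1 + \<delta>) * ((1 - \<epsilon>) * \<mu>)"
    using assms by (auto simp: \<epsilon>_def field_simps)
  have "1 - 1 / real n = 1 - n * (2 * exp (- (\<epsilon>\<^sup>2 * \<mu> / 3)))"
    using exp_deviation_at_sample_size[OF assms(1,3), folded \<epsilon>_def \<mu>] assms(1)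
    by (simp add: power2_eq_square)
  also have "\<dots> \<le> measure_pmf.prob (pair_pmf (assign_pmf s n (l / s)) (nonstraggler_pmf s (1 - p_t)))
                   {(A, R). \<forall>j<n. (1 - \<epsilon>) * \<mu> \<le> card {i\<in>R. A (i, j)} \<and> card {i\<in>R. A (i, j)} \<le> (1 + \<epsilon>) * \<mu>}"
    by (rule column_counts_within_prob_ge[OF pa q \<epsilon>(1,2), where n = n and s = s, folded \<mu>_def])
  also have "\<dots> \<le> measure_pmf.prob (pair_pmf (assign_pmf s n (l / s)) (nonstraggler_pmf s (1 - p_t)))
                   {(A, R). resilient n \<delta> A R}"
    unfolding \<epsilon>(3) using \<open>\<mu> > 0\<close> \<epsilon>(2) by (intro prob_column_counts_between_le_prob_resilient) simp
  finally show ?thesis .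
qed

end
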